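(* With $d_k$ as defined below, for every $0\le k\le q-1$, $$d_k=-(-1)^{k+\lfloor k/p\rfloor}\,k!\binom{q/p-1}{\lfloor k/p\rfloor}.$$
   Context: $\mathbf{F}_q$ has characteristic $p$. $M(k,b,D)$ denotes the number of ordered $k$-tuples of pairwise distinct elements of $D\subseteq\mathbf{F}_q$ with sum $b$. $d_0=-1$ and $d_k=M(k,1,\mathbf{F}_q^* )-M(k,0,\mathbf{F}_q^* )$ for $k\ge1$. Binomial coefficients $\binom{x}{m}=x(x-1)\cdots(x-m+1)/m!$ for real $x$, integer $m\ge0$. *)

theory Defs
  imports "HOL-Analysis.Analysis"
begin

definition M :: "nat \<Rightarrow> 'a::{finite,field} \<Rightarrow> 'a set \<Rightarrow> nat" where
  "M k b D = card {xs. length xs = k \<and> distinct xs \<and> set xs \<subseteq> D \<and> sum_list xs = b}"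

definition d :: "'a::{finite,field} itself \<Rightarrow> nat \<Rightarrow> int" where
  "d _ k = (if k = 0 then -1
            else int (M k (1::'a) (UNIV - {0})) - int (M k (0::'a) (UNIV - {0})))"

end

theory Submission
  imports Defs "HOL-Combinatorics.Multiset_Permutations"
begin

(*
  Write U for the set of nonzero elements of F_q and A_k(b) for the number
  of k-element subsets of U with sum b.  Every such subset has k! orderings, so
  d_k = k! * e_k with e_k = A_k(1) - A_k(0) (and e_0 = -1).

  For any finite subset D of a ring, double counting and repeatedly removing one element
  give a Newton-type identity
     (k+1) A_{k+1}(b) = sum_{j<=k} (-1)^j sum_{x in D} A_{k-j}(b - (j+1) x).
  For D = U the inner sum is evaluated by the substitution x |-> b - s x, which is a
  bijection of U onto F_q - {b} unless s = 0 in F_q, i.e. unless p divides s.  Hence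
     (k+1) e_{k+1} = sum_{j<=k} (-1)^j w(j+1) e_{k-j},  w(s) = (q-1 if p | s, else -1).
  The claimed closed form -(-1)^(k + k div p) * binom(q/p - 1, k div p) satisfies the same
  recurrence (by an identity for partial alternating sums of binomial coefficients and by
  splitting {0..k} into blocks of length p), and both sequences start with -1; such a
  recurrence determines its solution uniquely.
*)

definition subset_count :: "nat \<Rightarrow> 'a::ab_group_add \<Rightarrow> 'a set \<Rightarrow> nat" where
  "subset_count k b D = card {S. S \<subseteq> D \<and> card S = k \<and> \<Sum>S = b}"

text \<open>Ordered tuples of distinct elements are the orderings of subsets.\<close>
lemma M_eq_fact_subset_count:
  fixes b :: "'a::{finite,field}"
  shows "M k b D = fact k * subset_count k b D"
proof -
  let ?F = "{S. S \<subseteq> D \<and> card S = k \<and> \<Sum>S = b}"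
  have sum_list_set: "distinct xs \<Longrightarrow> sum_list xs = \<Sum>(set xs)" for xs :: "'a list"
    using sum_list_distinct_conv_sum_set[of xs "\<lambda>x. x"] by simp
  have tuples: "{xs. length xs = k \<and> distinct xs \<and> set xs \<subseteq> D \<and> sum_list xs = b}
      = (\<Union>S\<in>?F. permutations_of_set S)"
    by (auto simp: permutations_of_set_def distinct_card sum_list_set intro!: bexI[of _ "set xs" for xs])
  have "card (\<Union>S\<in>?F. permutations_of_set S) = (\<Sum>S\<in>?F. card (permutations_of_set S))"
    by (rule card_UN_disjoint) (simp, simp, auto simp: permutations_of_set_def)
  also have "\<dots> = (\<Sum>S\<in>?F. fact k)"
    by (rule sum.cong) auto
  finally show ?thesis
    by (simp add: M_def subset_count_def tuples)
qed

lemma subset_count_0: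
  assumes "finite D"
  shows "subset_count 0 c D = (if c = 0 then 1 else 0)"
proof -
  have "{S. S \<subseteq> D \<and> card S = 0 \<and> \<Sum>S = c} = (if c = 0 then {{}} else {})"
    using assms by (auto dest: finite_subset)
  then show ?thesis
    by (simp add: subset_count_def)
qed

lemma subset_count_containing:
  assumes "finite D" "x \<in> D"
  shows "card {S. S \<subseteq> D \<and> card S = Suc k \<and> \<Sum>S = c \<and> x \<in> S}
       = subset_count k (c - x) (D - {x})"
  unfolding subset_count_def
proof (rule bij_betw_same_card[of "\<lambda>S. S - {x}"], rule bij_betw_byWitness[where f' = "insert x"])
  have finite_subsets: "S \<subseteq> D \<Longrightarrow> finite S" for S
    using assms(1) by (rule rev_finite_subset)
  show "(\<lambda>S. S - {x}) ` {S. S \<subseteq> D \<and> card S = Suc k \<and> \<Sum>S = c \<and> x \<in> S}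
      \<subseteq> {S. S \<subseteq> D - {x} \<and> card S = k \<and> \<Sum>S = c - x}"
    using finite_subsets by (auto simp: sum_diff1 card_Diff_singleton)
  show "insert x ` {S. S \<subseteq> D - {x} \<and> card S = k \<and> \<Sum>S = c - x}
      \<subseteq> {S. S \<subseteq> D \<and> card S = Suc k \<and> \<Sum>S = c \<and> x \<in> S}"
  proof (rule image_subsetI)
    fix S assume "S \<in> {S. S \<subseteq> D - {x} \<and> card S = k \<and> \<Sum>S = c - x}"
    moreover have "finite S"
      using calculation finite_subsets by blast
    ultimately show "insert x S \<in> {S. S \<subseteq> D \<and> card S = Suc k \<and> \<Sum>S = c \<and> x \<in> S}"
      using assms(2) by (auto simp: card_insert_if sum.insert_if)
  qed
qed auto

lemma subset_count_remove:
  assumes "finite D" "x \<in> D"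
  shows "subset_count (Suc k) c D = subset_count (Suc k) c (D - {x}) + subset_count k (c - x) (D - {x})"
proof -
  have split: "{S. S \<subseteq> D \<and> card S = Suc k \<and> \<Sum>S = c}
      = {S. S \<subseteq> D - {x} \<and> card S = Suc k \<and> \<Sum>S = c}
        \<union> {S. S \<subseteq> D \<and> card S = Suc k \<and> \<Sum>S = c \<and> x \<in> S}"
    by auto
  have "card {S. S \<subseteq> D \<and> card S = Suc k \<and> \<Sum>S = c}
      = subset_count (Suc k) c (D - {x}) + card {S. S \<subseteq> D \<and> card S = Suc k \<and> \<Sum>S = c \<and> x \<in> S}"
    unfolding split subset_count_def using assms(1)
    by (intro card_Un_disjoint) (auto intro: finite_subset[of _ "Pow D"])
  then show ?thesis
    by (simp add: subset_count_def subset_count_containing[OF assms])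
qed

text \<open>Counting pairs (element, subset containing it) in two ways.\<close>
lemma subset_count_double_counting:
  assumes "finite D"
  shows "Suc k * subset_count (Suc k) b D = (\<Sum>x\<in>D. subset_count k (b - x) (D - {x}))"
proof -
  let ?F = "{S. S \<subseteq> D \<and> card S = Suc k \<and> \<Sum>S = b}"
  have fin: "finite ?F"
    using assms by (auto intro: finite_subset[of _ "Pow D"])
  have "(\<Sum>x\<in>D. subset_count k (b - x) (D - {x})) = (\<Sum>x\<in>D. card {S\<in>?F. x \<in> S})"
    using assms by (intro sum.cong) (auto simp: subset_count_containing[symmetric] intro: arg_cong[where f = card])
  also have "\<dots> = (\<Sum>x\<in>D. \<Sum>S\<in>?F. if x \<in> S then 1 else 0)"
    using sum.inter_filter[OF fin, of "\<lambda>_. 1::nat"] by simp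
  also have "\<dots> = (\<Sum>S\<in>?F. \<Sum>x\<in>D. if x \<in> S then 1 else 0)"
    by (rule sum.swap)
  also have "\<dots> = (\<Sum>S\<in>?F. Suc k)"
    using assms by (intro sum.cong) (auto simp: sum.If_cases Int_absorb1)
  finally show ?thesis
    by (simp add: subset_count_def)
qed

text \<open>Iterating the Pascal recursion expresses counts in \<open>D - {x}\<close> by counts in \<open>D\<close>.\<close>
lemma subset_count_unroll:
  fixes x :: "'a::ring_1"
  assumes "finite D" "x \<in> D"
  shows "int (subset_count r c (D - {x}))
       = (\<Sum>j\<le>r. (-1)^j * int (subset_count (r - j) (c - of_nat j * x) D))"
proof (induction r arbitrary: c)
  case 0
  then show ?case
    using assms by (simp add: subset_count_0)
next
  case (Suc r)
  have shift: "c - x - of_nat j * x = c - of_nat (Suc j) * x" for j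
    by (simp add: algebra_simps)
  have "int (subset_count (Suc r) c (D - {x}))
      = int (subset_count (Suc r) c D) - int (subset_count r (c - x) (D - {x}))"
    using subset_count_remove[OF assms, of r c] by simp
  also have "\<dots> = int (subset_count (Suc r) c D)
      + (\<Sum>j\<le>r. (-1)^Suc j * int (subset_count (Suc r - Suc j) (c - of_nat (Suc j) * x) D))"
    by (simp add: Suc.IH shift sum_negf)
  also have "\<dots> = (\<Sum>j\<le>Suc r. (-1)^j * int (subset_count (Suc r - j) (c - of_nat j * x) D))"
    by (simp only: sum.atMost_Suc_shift) simp
  finally show ?case .
qed

lemma subset_count_newton:
  fixes b :: "'a::ring_1"
  assumes "finite D"
  shows "int (Suc k) * int (subset_count (Suc k) b D)
       = (\<Sum>j\<le>k. (-1)^j * (\<Sum>x\<in>D. int (subset_count (k - j) (b - of_nat (Suc j) * x) D)))"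
proof -
  have shift: "b - x - of_nat j * x = b - of_nat (Suc j) * x" for x :: 'a and j
    by (simp add: algebra_simps)
  have "int (Suc k) * int (subset_count (Suc k) b D) = (\<Sum>x\<in>D. int (subset_count k (b - x) (D - {x})))"
    by (simp only: of_nat_mult [symmetric] subset_count_double_counting[OF assms] of_nat_sum)
  also have "\<dots> = (\<Sum>x\<in>D. \<Sum>j\<le>k. (-1)^j * int (subset_count (k - j) (b - of_nat (Suc j) * x) D))"
    using assms by (intro sum.cong) (simp_all add: subset_count_unroll shift)
  also have "\<dots> = (\<Sum>j\<le>k. (-1)^j * (\<Sum>x\<in>D. int (subset_count (k - j) (b - of_nat (Suc j) * x) D)))"
    by (subst sum.swap) (simp add: sum_distrib_left)
  finally show ?thesis .
qed

lemma sum_units_affine: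
  fixes f :: "'a::{finite,field} \<Rightarrow> 'b::comm_ring_1" and s b :: 'a
  shows "(\<Sum>x\<in>UNIV - {0}. f (b - s * x))
       = (if s = 0 then (of_nat CARD('a) - 1) * f b else (\<Sum>c\<in>UNIV. f c) - f b)"
proof (cases "s = 0")
  case True
  then show ?thesis
    by (simp add: card_Diff_singleton of_nat_diff)
next
  case False
  have "bij_betw (\<lambda>x. b - s * x) (UNIV - {0}) (UNIV - {b})"
    by (rule bij_betw_byWitness[where f' = "\<lambda>y. (b - y) / s"]) (use False in auto)
  then have "(\<Sum>x\<in>UNIV - {0}. f (b - s * x)) = (\<Sum>c\<in>UNIV - {b}. f c)"
    by (rule sum.reindex_bij_betw)
  then show ?thesis
    using False by (simp add: sum_diff1)
qed

text \<open>The normalised difference \<open>e_k = A_k(1) - A_k(0)\<close> for subsets of the nonzero elements.\<close>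
definition unit_subset_gap :: "'a::{finite,field} itself \<Rightarrow> nat \<Rightarrow> int" where
  "unit_subset_gap _ k
     = int (subset_count k 1 (UNIV - {0::'a})) - int (subset_count k 0 (UNIV - {0::'a}))"

text \<open>The weight \<open>w(s)\<close> of the recurrence, with \<open>q\<close> the field size and \<open>p\<close> its characteristic.\<close>
definition newton_weight :: "nat \<Rightarrow> real \<Rightarrow> nat \<Rightarrow> real" where
  "newton_weight p q s = (if p dvd s then q - 1 else -1)"

text \<open>The recurrence satisfied by \<open>e_k\<close>: specialise the Newton identity to the nonzero elements.\<close>
lemma unit_subset_gap_newton:
  "real (Suc k) * unit_subset_gap TYPE('a::{finite,field}) (Suc k)
     = (\<Sum>j\<le>k. (-1)^j * newton_weight CHAR('a) CARD('a) (Suc j) * unit_subset_gap TYPE('a) (k - j))"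
proof -
  let ?U = "UNIV - {0::'a}"
  let ?N = "\<lambda>m c. real (subset_count m c ?U)"
  have newton: "real (Suc k) * ?N (Suc k) b
      = (\<Sum>j\<le>k. (-1)^j * (\<Sum>x\<in>?U. ?N (k - j) (b - of_nat (Suc j) * x)))" for b :: 'a
    using arg_cong[OF subset_count_newton[of ?U k b], of real_of_int] by simp
  have gap_term: "(\<Sum>x\<in>?U. ?N m (1 - of_nat s * x)) - (\<Sum>x\<in>?U. ?N m (0 - of_nat s * x))
      = newton_weight CHAR('a) CARD('a) s * unit_subset_gap TYPE('a) m" for m s
    unfolding sum_units_affine[of "\<lambda>c. ?N m c" 1] sum_units_affine[of "\<lambda>c. ?N m c" 0]
    by (simp add: newton_weight_def unit_subset_gap_def of_nat_eq_0_iff_char_dvd algebra_simps)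
  have "real (Suc k) * unit_subset_gap TYPE('a) (Suc k) = real (Suc k) * ?N (Suc k) 1 - real (Suc k) * ?N (Suc k) 0"
    by (simp add: unit_subset_gap_def algebra_simps)
  also have "\<dots> = (\<Sum>j\<le>k. (-1)^j * ((\<Sum>x\<in>?U. ?N (k - j) (1 - of_nat (Suc j) * x))
                                   - (\<Sum>x\<in>?U. ?N (k - j) (0 - of_nat (Suc j) * x))))"
    by (simp only: newton sum_subtractf right_diff_distrib)
  finally show ?thesis
    by (simp only: gap_term mult.assoc)
qed

lemma gbinomial_alternating_partial_sum:
  fixes a :: "'a::field_char_0"
  shows "a * (\<Sum>t<m. (-1)^t * (a gchoose t)) = - (of_nat m * ((-1)^m * (a gchoose m)))"
proof (cases m)
  case 0
  then show ?thesis by simp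
next
  case (Suc N)
  have "(\<Sum>t<m. (-1)^t * (a gchoose t)) = (-1)^N * (a - 1 gchoose N)"
    using gbinomial_sum_lower_neg[of a N] Suc by (simp add: lessThan_Suc_atMost mult.commute)
  then have "a * (\<Sum>t<m. (-1)^t * (a gchoose t)) = (-1)^N * (a * (a - 1 gchoose N))"
    by (simp add: mult.left_commute)
  also have "\<dots> = (-1)^N * (of_nat m * (a gchoose m))"
    using gbinomial_absorption[of N a] Suc by (simp only:)
  finally show ?thesis
    using Suc by simp
qed

lemma sum_div_blocks:
  fixes h :: "nat \<Rightarrow> 'a::comm_semiring_1"
  assumes "p > 0"
  shows "(\<Sum>i<n. h (i div p)) = of_nat p * (\<Sum>t<n div p. h t) + of_nat (n mod p) * h (n div p)"
proof (induction n)
  case 0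
  then show ?case by simp
next
  case (Suc n)
  show ?case
  proof (cases "Suc (n mod p) = p")
    case True
    then have "Suc n div p = Suc (n div p)" "Suc n mod p = 0"
      using assms by (auto simp: div_Suc mod_Suc)
    moreover have "of_nat p = of_nat (n mod p) + (1::'a)"
      using True by (metis of_nat_Suc add.commute)
    ultimately show ?thesis
      using Suc.IH by (simp add: algebra_simps)
  next
    case False
    then have "Suc n div p = n div p" "Suc n mod p = Suc (n mod p)"
      using assms by (auto simp: div_Suc mod_Suc)
    then show ?thesis
      using Suc.IH by (simp add: algebra_simps)
  qed
qed

lemma sum_multiples_reversed:
  fixes H :: "nat \<Rightarrow> 'a::comm_monoid_add"
  assumes p: "p > 0"
  shows "(\<Sum>j\<in>{j\<in>{..k}. p dvd Suc j}. H ((k - j) div p)) = (\<Sum>t<Suc k div p. H t)"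
proof -
  define M where "M = Suc k div p"
  have M_le: "M * p \<le> Suc k"
    unfolding M_def by (rule div_times_less_eq_dividend)
  have quotient: "(Suc k - m * p) div p = M - m" if "m * p \<le> Suc k" for m
  proof -
    have "(Suc k - m * p + m * p) div p = (Suc k - m * p) div p + m"
      using p by simp
    then show ?thesis
      using that by (simp add: M_def)
  qed
  show ?thesis
  proof (rule sum.reindex_bij_witness[where i = "\<lambda>t. (M - t) * p - 1" and j = "\<lambda>j. M - Suc j div p"])
    fix t assume "t \<in> {..<Suc k div p}"
    then have t: "t < M" by (simp add: M_def)
    then have multiple: "Suc ((M - t) * p - 1) = (M - t) * p"
      using p by simp
    show "M - Suc ((M - t) * p - 1) div p = t"
      unfolding multiple using p t by simp
    have "(M - t) * p \<le> M * p" by simp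
    then show "(M - t) * p - 1 \<in> {j\<in>{..k}. p dvd Suc j}"
      using M_le multiple by (metis (no_types, lifting) Suc_le_mono atMost_iff dvd_triv_right le_trans mem_Collect_eq)
  next
    fix j assume "j \<in> {j\<in>{..k}. p dvd Suc j}"
    then have j: "j \<le> k" and "p dvd Suc j"
      by simp_all
    then obtain m where jm: "Suc j = m * p"
      by (metis dvdE mult.commute)
    have m_quot: "Suc j div p = m"
      unfolding jm using p by simp
    have m_pos: "1 \<le> m"
      using jm by (cases m) auto
    have "m \<le> M"
      unfolding M_def using div_le_mono[of "Suc j" "Suc k" p] j m_quot by simp
    then show "(M - (M - Suc j div p)) * p - 1 = j" "M - Suc j div p \<in> {..<Suc k div p}"
      using m_quot m_pos jm by (simp_all add: M_def)
    have "k - j = Suc k - m * p" using jm by simp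
    then show "H (M - Suc j div p) = H ((k - j) div p)"
      using quotient[of m] m_quot jm j by simp
  qed
qed

lemma sum_newton_weight:
  fixes G :: "nat \<Rightarrow> real"
  shows "(\<Sum>j\<le>k. newton_weight p q (Suc j) * G (k - j))
       = - (\<Sum>j\<le>k. G (k - j)) + q * (\<Sum>j\<in>{j\<in>{..k}. p dvd Suc j}. G (k - j))"
proof -
  have "(\<Sum>j\<le>k. newton_weight p q (Suc j) * G (k - j))
      = (\<Sum>j\<le>k. - G (k - j) + (if p dvd Suc j then q * G (k - j) else 0))"
    by (intro sum.cong) (auto simp: newton_weight_def algebra_simps)
  also have "\<dots> = - (\<Sum>j\<le>k. G (k - j)) + (\<Sum>j\<le>k. if p dvd Suc j then q * G (k - j) else 0)"
    by (simp only: sum.distrib sum_negf)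
  also have "(\<Sum>j\<le>k. if p dvd Suc j then q * G (k - j) else 0)
      = (\<Sum>j\<in>{j\<in>{..k}. p dvd Suc j}. q * G (k - j))"
    by (rule sum.inter_filter[symmetric]) simp
  finally show ?thesis
    by (simp add: sum_distrib_left)
qed

lemma sum_sign_convolution:
  fixes w G :: "nat \<Rightarrow> 'a::comm_ring_1"
  shows "(\<Sum>j\<le>k. (-1)^j * w j * ((-1)^(k - j) * G (k - j))) = (-1)^k * (\<Sum>j\<le>k. w j * G (k - j))"
  unfolding sum_distrib_left
proof (intro sum.cong refl)
  fix j assume "j \<in> {..k}"
  then have "(-1::'a)^j * (-1)^(k - j) = (-1)^k"
    by (simp flip: power_add)
  then show "(-1)^j * w j * ((-1)^(k - j) * G (k - j)) = (-1)^k * (w j * G (k - j))"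
    by (metis mult.assoc mult.left_commute)
qed

text \<open>The claimed value of \<open>e_i\<close>, with \<open>a = q/p - 1\<close>.\<close>
definition closed_form :: "nat \<Rightarrow> real \<Rightarrow> nat \<Rightarrow> real" where
  "closed_form p a i = - ((-1)^(i + i div p) * (a gchoose (i div p)))"

lemma closed_form_newton:
  assumes p: "p > 0"
  shows "real (Suc k) * closed_form p a (Suc k)
       = (\<Sum>j\<le>k. (-1)^j * newton_weight p (real p * (a + 1)) (Suc j) * closed_form p a (k - j))"
proof -
  define g where "g t = (-1)^t * (a gchoose t)" for t
  define G where "G i = g (i div p)" for i
  define n where "n = Suc k"
  define M where "M = n div p"
  define r where "r = n mod p"
  define S where "S = (\<Sum>t<M. g t)"
  have closed_G: "closed_form p a i = - ((-1)^i * G i)" for i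
    by (simp add: closed_form_def G_def g_def power_add)
  have weights: "(\<Sum>j\<le>k. newton_weight p (real p * (a + 1)) (Suc j) * G (k - j))
      = - (\<Sum>j\<le>k. G (k - j)) + real p * (a + 1) * (\<Sum>j\<in>{j\<in>{..k}. p dvd Suc j}. G (k - j))"
    by (rule sum_newton_weight)
  have all_terms: "(\<Sum>j\<le>k. G (k - j)) = real p * S + real r * g M"
    using sum.nat_diff_reindex[of G "Suc k"] sum_div_blocks[OF p, of g n]
    by (simp add: lessThan_Suc_atMost G_def S_def M_def r_def n_def)
  have multiples: "(\<Sum>j\<in>{j\<in>{..k}. p dvd Suc j}. G (k - j)) = S"
    unfolding G_def S_def M_def n_def by (rule sum_multiples_reversed[OF p])
  have alternating: "real M * g M = - (a * S)"
    unfolding S_def g_def using gbinomial_alternating_partial_sum[of a M] by simp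
  have "real n = real p * real M + real r"
    unfolding M_def r_def by (metis div_mult_mod_eq of_nat_add of_nat_mult mult.commute)
  then have "real n * g M = real p * (real M * g M) + real r * g M"
    by (simp add: algebra_simps)
  also have "\<dots> = - (- (real p * S + real r * g M) + real p * (a + 1) * S)"
    unfolding alternating by (simp add: algebra_simps)
  finally have key: "- (real p * S + real r * g M) + real p * (a + 1) * S = - (real n * g M)"
    by simp
  have "(\<Sum>j\<le>k. (-1)^j * newton_weight p (real p * (a + 1)) (Suc j) * closed_form p a (k - j))
      = - ((-1)^k * (\<Sum>j\<le>k. newton_weight p (real p * (a + 1)) (Suc j) * G (k - j)))"
    unfolding closed_G using sum_sign_convolution[where w = "\<lambda>j. newton_weight p (real p * (a + 1)) (Suc j)" and G = G]
    by (simp add: sum_negf)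
  also have "\<dots> = (-1)^k * (real n * g M)"
    unfolding weights all_terms multiples key by simp
  also have "\<dots> = real n * closed_form p a n"
    unfolding closed_G G_def M_def n_def by simp
  finally show ?thesis
    unfolding n_def ..
qed

lemma newton_recurrence_unique:
  fixes f g w :: "nat \<Rightarrow> 'a::field_char_0"
  assumes "f 0 = g 0"
    and "\<And>k. of_nat (Suc k) * f (Suc k) = (\<Sum>j\<le>k. w j * f (k - j))"
    and "\<And>k. of_nat (Suc k) * g (Suc k) = (\<Sum>j\<le>k. w j * g (k - j))"
  shows "f n = g n"
proof (induction n rule: less_induct)
  case (less n)
  show ?case
  proof (cases n)
    case 0
    then show ?thesis using assms(1) by simp
  next
    case (Suc k)
    have "(\<Sum>j\<le>k. w j * f (k - j)) = (\<Sum>j\<le>k. w j * g (k - j))"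
      using less Suc by (intro sum.cong) auto
    then have "of_nat (Suc k) * f (Suc k) = of_nat (Suc k) * g (Suc k)"
      by (simp only: assms(2,3))
    then show ?thesis
      using Suc by (metis mult_cancel_left of_nat_neq_0)
  qed
qed

lemma unit_subset_gap_0: "unit_subset_gap TYPE('a::{finite,field}) 0 = -1"
  by (simp add: unit_subset_gap_def subset_count_0)

text \<open>Both sequences satisfy the same recurrence and start at \<open>-1\<close>.\<close>
lemma unit_subset_gap_closed_form:
  "real_of_int (unit_subset_gap TYPE('a::{finite,field}) k)
     = closed_form CHAR('a) (real CARD('a) / real CHAR('a) - 1) k"
proof (rule newton_recurrence_unique[where w = "\<lambda>j. (-1)^j * newton_weight CHAR('a) CARD('a) (Suc j)"])
  have p: "CHAR('a) > 0"
    by (rule finite_imp_CHAR_pos) simp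
  then have q: "real CHAR('a) * (real CARD('a) / real CHAR('a) - 1 + 1) = real CARD('a)"
    by simp
  show "real_of_int (unit_subset_gap TYPE('a) 0) = closed_form CHAR('a) (real CARD('a) / real CHAR('a) - 1) 0"
    by (simp add: unit_subset_gap_0 closed_form_def)
  show "of_nat (Suc k) * real_of_int (unit_subset_gap TYPE('a) (Suc k))
      = (\<Sum>j\<le>k. (-1)^j * newton_weight CHAR('a) CARD('a) (Suc j) * real_of_int (unit_subset_gap TYPE('a) (k - j)))" for k
    by (simp only: unit_subset_gap_newton of_nat_Suc[symmetric])
  show "of_nat (Suc k) * closed_form CHAR('a) (real CARD('a) / real CHAR('a) - 1) (Suc k)
      = (\<Sum>j\<le>k. (-1)^j * newton_weight CHAR('a) CARD('a) (Suc j) * closed_form CHAR('a) (real CARD('a) / real CHAR('a) - 1) (k - j))" for k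
    using closed_form_newton[OF p, of k "real CARD('a) / real CHAR('a) - 1"] by (simp only: q)
qed

lemma d_eq_fact_unit_subset_gap: "d TYPE('a::{finite,field}) k = fact k * unit_subset_gap TYPE('a) k"
  by (cases "k = 0")
     (simp_all add: d_def unit_subset_gap_def subset_count_0 M_eq_fact_subset_count algebra_simps)

text \<open>The main result.\<close>
theorem corollary2p5:
  fixes k :: nat
  assumes "k \<le> CARD('a::{finite,field}) - 1"
  shows "real_of_int (d TYPE('a) k) =
    - ((-1) ^ (k + k div CHAR('a)) * fact k *
       ((real CARD('a) / real CHAR('a) - 1) gchoose (k div CHAR('a))))"
proof -
  have "real_of_int (d TYPE('a) k) = fact k * closed_form CHAR('a) (real CARD('a) / real CHAR('a) - 1) k"
    by (simp add: d_eq_fact_unit_subset_gap unit_subset_gap_closed_form)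
  then show ?thesis
    by (simp add: closed_form_def)
qed

end
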